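(* Let $\alpha,\beta,\gamma,x$ be real numbers and $\lambda$ a nonnegative integer. For all nonnegative integers $n$, $$A_{n}^{\lambda,x}(\alpha,\beta,\gamma)=(-1)^{n}\sum_{k=0}^{n}\binom{k+\lambda-1}{k}(-\beta)^{k}k!\,S(n,k,\alpha,\beta,\beta\lambda-\gamma)\,(x+1)^{k}.$$
   Context: For a number $t$ and $\alpha$, the generalised factorial is $(t|\alpha)_n=\prod_{j=0}^{n-1}(t-j\alpha)$ for $n\ge 1$ and $(t|\alpha)_0=1$. For parameters $\alpha,\beta,\gamma$, the generalised Stirling numbers $S(n,k,\alpha,\beta,\gamma)$ ($0\le k\le n$) are defined by the polynomial identity $(t|\alpha)_n=\sum_{k=0}^{n}S(n,k,\alpha,\beta,\gamma)\,(t-\gamma|\beta)_k$ in the variable $t$. For a nonnegative integer $\lambda$ put $\binom{k+\lambda-1}{k}=\lambda(\lambda+1)\cdots(\lambda+k-1)/k!$ (equal to $1$ for $k=0$). Define $$A^{\lambda,x}_n(\alpha,\beta,\gamma)=\sum_{k=0}^{n}\binom{k+\lambda-1}{k}(-1)^{n+k}\beta^k k!\,S(n,k,\alpha,-\beta,-\gamma)\,x^k .$$ *)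

theory Defs
  imports Complex_Main
begin

text \<open>Generalised factorial (t|alpha)_n = prod_{j=0}^{n-1} (t - j alpha); empty product is 1.\<close>
definition gfact :: "real \<Rightarrow> real \<Rightarrow> nat \<Rightarrow> real" where
  "gfact t \<alpha> n = (\<Prod>j<n. t - real j * \<alpha>)"

definition gstirling :: "nat \<Rightarrow> nat \<Rightarrow> real \<Rightarrow> real \<Rightarrow> real \<Rightarrow> real" where
  "gstirling n k \<alpha> \<beta> \<gamma> =
     (THE s :: nat \<Rightarrow> real. (\<forall>j>n. s j = 0) \<and>
        (\<forall>t. gfact t \<alpha> n = (\<Sum>j=0..n. s j * gfact (t - \<gamma>) \<beta> j))) k"

text \<open>binom(k+lambda-1, k) = lambda(lambda+1)...(lambda+k-1)/k!\<close>
definition negbin :: "nat \<Rightarrow> nat \<Rightarrow> real" where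
  "negbin lam k = pochhammer (real lam) k / fact k"

definition Apoly :: "nat \<Rightarrow> real \<Rightarrow> nat \<Rightarrow> real \<Rightarrow> real \<Rightarrow> real \<Rightarrow> real" where
  "Apoly lam x n \<alpha> \<beta> \<gamma> =
     (\<Sum>k=0..n. negbin lam k * (-1) ^ (n + k) * \<beta> ^ k * fact k
                 * gstirling n k \<alpha> (-\<beta>) (-\<gamma>) * x ^ k)"

end

theory Submission
  imports Defs "HOL-Computational_Algebra.Polynomial"
begin

text \<open>Expanding \<open>(t|\<alpha>)\<^sub>n\<close> in the basis \<open>(t - (\<beta>\<lambda> - \<gamma>)|\<beta>)\<^sub>m\<close> and re-expanding each
  \<open>(v - \<beta>\<lambda>|\<beta>)\<^sub>m\<close>, \<open>v = t + \<gamma>\<close>, in the basis \<open>(v|-\<beta>)\<^sub>k\<close> writes \<open>S(n,k,\<alpha>,-\<beta>,-\<gamma>)\<close> as a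
  combination of the \<open>S(n,m,\<alpha>,\<beta>,\<beta>\<lambda>-\<gamma>)\<close> with coefficients
  \<open>(-1)\<^bsup>m+k\<^esup> C(m,k) (\<beta>\<lambda>+k\<beta>|-\<beta>)\<^sub>m\<^sub>-\<^sub>k\<close>. Since \<open>C(k+\<lambda>-1,k) \<beta>\<^sup>k k! = (\<beta>\<lambda>|-\<beta>)\<^sub>k\<close>, substituting
  this into \<open>A\<^sub>n\<close> and summing over \<open>k\<close> first, the inner sum collapses by
  \<open>(\<beta>\<lambda>|-\<beta>)\<^sub>k (\<beta>\<lambda>+k\<beta>|-\<beta>)\<^sub>m\<^sub>-\<^sub>k = (\<beta>\<lambda>|-\<beta>)\<^sub>m\<close> and the binomial theorem to \<open>(\<beta>\<lambda>|-\<beta>)\<^sub>m (x+1)\<^sup>m\<close>.\<close>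

lemma sum_choose_Suc_split:
  fixes g :: "nat \<Rightarrow> 'a::comm_semiring_1"
  shows "(\<Sum>k\<le>Suc m. of_nat (Suc m choose k) * g k)
           = (\<Sum>k\<le>m. of_nat (m choose k) * (g k + g (Suc k)))"
proof -
  have "(\<Sum>k\<le>Suc m. of_nat (Suc m choose k) * g k)
      = g 0 + (\<Sum>k\<le>m. of_nat (m choose Suc k) * g (Suc k)) + (\<Sum>k\<le>m. of_nat (m choose k) * g (Suc k))"
    by (subst sum.atMost_Suc_shift) (simp add: distrib_right sum.distrib add_ac)
  also have "g 0 + (\<Sum>k\<le>m. of_nat (m choose Suc k) * g (Suc k))
      = (\<Sum>k\<le>Suc m. of_nat (m choose k) * g k)"
    by (subst sum.atMost_Suc_shift) simp
  also have "\<dots> = (\<Sum>k\<le>m. of_nat (m choose k) * g k)"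
    by (simp add: binomial_eq_0)
  finally show ?thesis
    by (simp add: distrib_left sum.distrib)
qed

lemma gfact_0 [simp]: "gfact t a 0 = 1"
  by (simp add: gfact_def)

lemma gfact_Suc: "gfact t a (Suc n) = gfact t a n * (t - real n * a)"
  by (simp add: gfact_def)

lemma gfact_add: "gfact t a (k + m) = gfact t a k * gfact (t - real k * a) a m"
  by (induction m) (simp_all add: gfact_Suc algebra_simps)

lemma gfact_rec: "gfact t a (Suc n) = t * gfact (t - a) a n"
  using gfact_add[of t a 1 n] by (simp add: gfact_def)

lemma gfact_uminus: "gfact (-t) (-a) n = (-1) ^ n * gfact t a n"
  by (induction n) (simp_all add: gfact_Suc algebra_simps)

lemma gfact_pochhammer: "gfact (b * a) (-b) k = b ^ k * pochhammer a k"
  by (induction k) (simp_all add: gfact_Suc pochhammer_Suc algebra_simps)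

lemma gfact_binomial_mixed:
  "gfact (u + c) (-b) m
     = (\<Sum>k\<le>m. real (m choose k) * (gfact u b k * gfact (c + real k * b) (-b) (m - k)))"
proof (induction m arbitrary: c)
  case 0
  show ?case by simp
next
  case (Suc m)
  define g where "g k = gfact u b k * gfact (c + real k * b) (-b) (Suc m - k)" for k
  have "gfact (u + c) (-b) (Suc m) = (u + c) * gfact (u + (c + b)) (-b) m"
    by (simp add: gfact_rec algebra_simps)
  also have "\<dots> = (\<Sum>k\<le>m. real (m choose k) * ((u - real k * b) + (c + real k * b))
                   * (gfact u b k * gfact (c + b + real k * b) (-b) (m - k)))"
    unfolding Suc sum_distrib_left by (intro sum.cong refl) (simp add: algebra_simps)
  also have "\<dots> = (\<Sum>k\<le>m. real (m choose k) * (g k + g (Suc k)))"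
  proof (intro sum.cong refl)
    fix k assume "k \<in> {..m}"
    then have gk: "g k = (c + real k * b) * gfact u b k * gfact (c + b + real k * b) (-b) (m - k)"
      by (simp add: g_def Suc_diff_le gfact_rec algebra_simps)
    have gSk: "g (Suc k) = (u - real k * b) * gfact u b k * gfact (c + b + real k * b) (-b) (m - k)"
      by (simp add: g_def gfact_Suc algebra_simps)
    show "real (m choose k) * ((u - real k * b) + (c + real k * b))
            * (gfact u b k * gfact (c + b + real k * b) (-b) (m - k))
          = real (m choose k) * (g k + g (Suc k))"
      unfolding gk gSk by (simp add: algebra_simps)
  qed
  also have "\<dots> = (\<Sum>k\<le>Suc m. real (Suc m choose k) * g k)"
    by (rule sum_choose_Suc_split[symmetric])
  finally show ?case
    by (simp add: g_def)
qed

lemma gfact_diff_expansion: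
  "gfact (v - c) b m
     = (\<Sum>k\<le>m. (-1) ^ (m + k) * real (m choose k) * gfact (c + real k * b) (-b) (m - k)
                 * gfact v (-b) k)"
proof -
  have "gfact (v - c) b m = (-1) ^ m * gfact (-v + c) (-b) m"
    using gfact_uminus[of "-v + c" "-b" m] by simp
  also have "\<dots> = (-1) ^ m * (\<Sum>k\<le>m. real (m choose k)
                     * ((-1) ^ k * gfact v (-b) k * gfact (c + real k * b) (-b) (m - k)))"
    unfolding gfact_binomial_mixed[of "-v" c b m] gfact_uminus[of v "-b", unfolded minus_minus] ..
  finally show ?thesis
    by (simp add: sum_distrib_left power_add mult_ac)
qed

lemma gfact_binomial_power:
  "(\<Sum>k\<le>m. real (m choose k) * (gfact c b k * gfact (c - real k * b) b (m - k) * x ^ k))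
     = gfact c b m * (x + 1) ^ m"
proof -
  have "gfact c b k * gfact (c - real k * b) b (m - k) = gfact c b m" if "k \<le> m" for k
    using gfact_add[of c b k "m - k"] that by simp
  then have "(\<Sum>k\<le>m. real (m choose k) * (gfact c b k * gfact (c - real k * b) b (m - k) * x ^ k))
      = (\<Sum>k\<le>m. gfact c b m * (real (m choose k) * x ^ k * 1 ^ (m - k)))"
    by (intro sum.cong refl) (simp add: mult_ac)
  then show ?thesis
    by (simp add: binomial_ring sum_distrib_left)
qed

definition gfact_poly :: "real \<Rightarrow> real \<Rightarrow> nat \<Rightarrow> real poly" where
  "gfact_poly c a n = (\<Prod>j<n. [:- (c + real j * a), 1:])"

lemma poly_gfact_poly: "poly (gfact_poly c a n) t = gfact (t - c) a n"
  by (simp add: gfact_poly_def gfact_def poly_prod algebra_simps)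

lemma degree_gfact_poly: "degree (gfact_poly c a n) = n"
  by (simp add: gfact_poly_def degree_prod_sum_eq)

lemma gfact_poly_nonzero: "gfact_poly c a n \<noteq> 0"
  by (simp add: gfact_poly_def)

lemma sum_smult_graded_eq_0:
  fixes p :: "nat \<Rightarrow> 'a::idom poly"
  assumes "\<And>j. j \<le> n \<Longrightarrow> degree (p j) = j" and "\<And>j. j \<le> n \<Longrightarrow> p j \<noteq> 0"
    and "(\<Sum>j\<le>n. smult (s j) (p j)) = 0" and "j \<le> n"
  shows "s j = 0"
  using assms
proof (induction n arbitrary: j)
  case 0
  then show ?case by simp
next
  case (Suc n)
  have "coeff (\<Sum>j\<le>Suc n. smult (s j) (p j)) (Suc n) = s (Suc n) * lead_coeff (p (Suc n))"
    using Suc.prems(1) by (simp add: coeff_sum coeff_eq_0)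
  then have "s (Suc n) * lead_coeff (p (Suc n)) = 0"
    by (metis Suc.prems(3) coeff_0)
  then have top: "s (Suc n) = 0"
    using Suc.prems(2) by simp
  then have "(\<Sum>j\<le>n. smult (s j) (p j)) = 0"
    using Suc.prems(3) by simp
  with Suc.IH Suc.prems top show ?case
    by (cases "j = Suc n") auto
qed

lemma gfact_expansion_unique:
  assumes "\<And>t. (\<Sum>j\<le>n. s j * gfact (t - \<gamma>) \<beta> j) = (\<Sum>j\<le>n. r j * gfact (t - \<gamma>) \<beta> j)"
    and "j \<le> n"
  shows "s j = r j"
proof -
  have "poly (\<Sum>j\<le>n. smult (s j - r j) (gfact_poly \<gamma> \<beta> j)) t = 0" for t
    using assms(1)[of t] by (simp add: poly_sum poly_gfact_poly algebra_simps sum_subtractf)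
  then have "(\<Sum>j\<le>n. smult (s j - r j) (gfact_poly \<gamma> \<beta> j)) = 0"
    using poly_all_0_iff_0 by blast
  from sum_smult_graded_eq_0[OF degree_gfact_poly gfact_poly_nonzero this assms(2)]
  show ?thesis by simp
qed

lemma gfact_expansion_exists:
  "\<exists>s. (\<forall>j>n. s j = 0) \<and> (\<forall>t. gfact t \<alpha> n = (\<Sum>j\<le>n. s j * gfact (t - \<gamma>) \<beta> j))"
proof (induction n)
  case 0
  show ?case by (rule exI[of _ "\<lambda>j. if j = 0 then 1 else 0"]) simp
next
  case (Suc n)
  then obtain s where s0: "\<forall>j>n. s j = 0"
    and s: "\<forall>t. gfact t \<alpha> n = (\<Sum>j\<le>n. s j * gfact (t - \<gamma>) \<beta> j)" by blast
  define s' where "s' j = (if j = 0 then 0 else s (j - 1)) + (\<gamma> + real j * \<beta> - real n * \<alpha>) * s j" for j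
  have "gfact t \<alpha> (Suc n) = (\<Sum>j\<le>Suc n. s' j * gfact (t - \<gamma>) \<beta> j)" for t
  proof -
    have "gfact t \<alpha> (Suc n) = (\<Sum>j\<le>n. s j * gfact (t - \<gamma>) \<beta> j
                                   * ((t - \<gamma> - real j * \<beta>) + (\<gamma> + real j * \<beta> - real n * \<alpha>)))"
      by (simp add: gfact_Suc s sum_distrib_right)
    also have "\<dots> = (\<Sum>j\<le>n. s j * gfact (t - \<gamma>) \<beta> (Suc j))
        + (\<Sum>j\<le>n. (\<gamma> + real j * \<beta> - real n * \<alpha>) * s j * gfact (t - \<gamma>) \<beta> j)"
      by (simp add: gfact_Suc sum.distrib[symmetric] algebra_simps)
    also have "(\<Sum>j\<le>n. s j * gfact (t - \<gamma>) \<beta> (Suc j))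
        = (\<Sum>j\<le>Suc n. (if j = 0 then 0 else s (j - 1)) * gfact (t - \<gamma>) \<beta> j)"
      by (subst sum.atMost_Suc_shift) simp
    also have "(\<Sum>j\<le>n. (\<gamma> + real j * \<beta> - real n * \<alpha>) * s j * gfact (t - \<gamma>) \<beta> j)
        = (\<Sum>j\<le>Suc n. (\<gamma> + real j * \<beta> - real n * \<alpha>) * s j * gfact (t - \<gamma>) \<beta> j)"
      using s0 by simp
    finally show ?thesis
      by (simp add: s'_def sum.distrib distrib_right)
  qed
  moreover have "\<forall>j>Suc n. s' j = 0"
    using s0 by (simp add: s'_def)
  ultimately show ?case by blast
qed

lemma gstirling_eqI:
  assumes "\<And>j. j > n \<Longrightarrow> s j = 0"
    and "\<And>t. gfact t \<alpha> n = (\<Sum>j\<le>n. s j * gfact (t - \<gamma>) \<beta> j)"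
  shows "gstirling n k \<alpha> \<beta> \<gamma> = s k"
proof -
  have "(THE s. (\<forall>j>n. s j = 0) \<and>
          (\<forall>t. gfact t \<alpha> n = (\<Sum>j=0..n. s j * gfact (t - \<gamma>) \<beta> j))) = s"
  proof (rule the_equality)
    fix r
    assume r: "(\<forall>j>n. r j = 0) \<and> (\<forall>t. gfact t \<alpha> n = (\<Sum>j=0..n. r j * gfact (t - \<gamma>) \<beta> j))"
    have "(\<Sum>j\<le>n. r j * gfact (t - \<gamma>) \<beta> j) = (\<Sum>j\<le>n. s j * gfact (t - \<gamma>) \<beta> j)" for t
      using r assms(2)[of t] by (simp add: atLeast0AtMost)
    then have "r j = s j" if "j \<le> n" for j
      using gfact_expansion_unique that by blast
    with r assms(1) show "r = s"
      by (metis ext not_le)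
  qed (use assms in \<open>simp add: atLeast0AtMost\<close>)
  then show ?thesis
    by (simp add: gstirling_def)
qed

lemma gfact_gstirling_expansion:
  "gfact t \<alpha> n = (\<Sum>j\<le>n. gstirling n j \<alpha> \<beta> \<gamma> * gfact (t - \<gamma>) \<beta> j)"
proof -
  obtain s where "\<forall>j>n. s j = 0" "\<forall>t. gfact t \<alpha> n = (\<Sum>j\<le>n. s j * gfact (t - \<gamma>) \<beta> j)"
    using gfact_expansion_exists by blast
  with gstirling_eqI[of n s] show ?thesis
    by simp
qed

lemma gstirling_reflect:
  "gstirling n k \<alpha> (-\<beta>) (-\<gamma>)
     = (\<Sum>m\<le>n. (-1) ^ (m + k) * real (m choose k) * gfact (c + real k * \<beta>) (-\<beta>) (m - k)
                  * gstirling n m \<alpha> \<beta> (c - \<gamma>))"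
proof (rule gstirling_eqI)
  fix t
  define S where "S m = gstirling n m \<alpha> \<beta> (c - \<gamma>)" for m
  define C where "C m k = (-1) ^ (m + k) * real (m choose k) * gfact (c + real k * \<beta>) (-\<beta>) (m - k)"
    for m k
  have "gfact t \<alpha> n = (\<Sum>m\<le>n. S m * gfact ((t + \<gamma>) - c) \<beta> m)"
    unfolding S_def by (subst gfact_gstirling_expansion[of _ _ _ \<beta> "c - \<gamma>"]) (simp add: algebra_simps)
  also have "\<dots> = (\<Sum>m\<le>n. \<Sum>k\<le>n. S m * C m k * gfact (t + \<gamma>) (-\<beta>) k)"
  proof (intro sum.cong refl)
    fix m assume "m \<in> {..n}"
    then have "(\<Sum>k\<le>m. C m k * gfact (t + \<gamma>) (-\<beta>) k) = (\<Sum>k\<le>n. C m k * gfact (t + \<gamma>) (-\<beta>) k)"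
      by (intro sum.mono_neutral_left) (auto simp: C_def binomial_eq_0)
    then show "S m * gfact ((t + \<gamma>) - c) \<beta> m = (\<Sum>k\<le>n. S m * C m k * gfact (t + \<gamma>) (-\<beta>) k)"
      by (simp add: gfact_diff_expansion C_def sum_distrib_left mult_ac)
  qed
  also have "\<dots> = (\<Sum>k\<le>n. (\<Sum>m\<le>n. C m k * S m) * gfact (t - - \<gamma>) (-\<beta>) k)"
    by (subst sum.swap) (simp add: sum_distrib_left sum_distrib_right mult_ac)
  finally show "gfact t \<alpha> n = (\<Sum>k\<le>n. (\<Sum>m\<le>n. (-1) ^ (m + k) * real (m choose k)
      * gfact (c + real k * \<beta>) (-\<beta>) (m - k) * gstirling n m \<alpha> \<beta> (c - \<gamma>)) * gfact (t - - \<gamma>) (-\<beta>) k)"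
    by (simp add: C_def S_def)
qed (simp add: binomial_eq_0)

lemma negbin_eq_gfact: "negbin lam k * \<beta> ^ k * fact k = gfact (\<beta> * real lam) (-\<beta>) k"
  by (simp add: negbin_def gfact_pochhammer)

theorem theorem11:
  fixes \<alpha> \<beta> \<gamma> x :: real and lam n :: nat
  shows "Apoly lam x n \<alpha> \<beta> \<gamma> =
    (-1) ^ n * (\<Sum>k=0..n. negbin lam k * (-\<beta>) ^ k * fact k
        * gstirling n k \<alpha> \<beta> (\<beta> * real lam - \<gamma>) * (x + 1) ^ k)"
proof -
  define S where "S m = gstirling n m \<alpha> \<beta> (\<beta> * real lam - \<gamma>)" for m
  define T where "T m k = gfact (\<beta> * real lam) (-\<beta>) k
                           * gfact (\<beta> * real lam + real k * \<beta>) (-\<beta>) (m - k) * x ^ k" for m k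
  have "Apoly lam x n \<alpha> \<beta> \<gamma>
      = (\<Sum>k\<le>n. \<Sum>m\<le>n. (-1) ^ n * ((-1) ^ m * S m) * (real (m choose k) * T m k))"
    unfolding Apoly_def atLeast0AtMost gstirling_reflect[where c = "\<beta> * real lam"]
    by (intro sum.cong refl)
      (simp add: sum_distrib_left sum_distrib_right S_def T_def negbin_eq_gfact[symmetric] power_add mult_ac)
  also have "\<dots> = (\<Sum>m\<le>n. (-1) ^ n * ((-1) ^ m * S m) * (\<Sum>k\<le>n. real (m choose k) * T m k))"
    by (subst sum.swap) (simp add: sum_distrib_left)
  also have "\<dots> = (\<Sum>m\<le>n. (-1) ^ n * ((-1) ^ m * S m) * (gfact (\<beta> * real lam) (-\<beta>) m * (x + 1) ^ m))"
  proof (intro sum.cong refl)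
    fix m assume "m \<in> {..n}"
    then have "(\<Sum>k\<le>n. real (m choose k) * T m k) = (\<Sum>k\<le>m. real (m choose k) * T m k)"
      by (intro sum.mono_neutral_right) (auto simp: binomial_eq_0)
    then show "(-1) ^ n * ((-1) ^ m * S m) * (\<Sum>k\<le>n. real (m choose k) * T m k)
        = (-1) ^ n * ((-1) ^ m * S m) * (gfact (\<beta> * real lam) (-\<beta>) m * (x + 1) ^ m)"
      using gfact_binomial_power[of m "\<beta> * real lam" "-\<beta>" x] by (simp add: T_def)
  qed
  also have "\<dots> = (-1) ^ n * (\<Sum>k=0..n. negbin lam k * (-\<beta>) ^ k * fact k
        * gstirling n k \<alpha> \<beta> (\<beta> * real lam - \<gamma>) * (x + 1) ^ k)"
    by (simp add: atLeast0AtMost sum_distrib_left S_def negbin_eq_gfact[symmetric] power_minus[of \<beta>] mult_ac)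
  finally show ?thesis .
qed

end
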